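(* Let $(\xi_n)_{n\geq1}$ be i.i.d. with $\mathbf{P}(\xi_1=1)=p=1-\mathbf{P}(\xi_1=-1)$, $p\in(0,1)$. For $x\geq1$ set $W_0:=x$, $B_1:=1$, $W_n:=W_{n-1}+\xi_nB_n$, $B_{n+1}:=B_n2^{\xi_n}$ for $n\geq1$, and $f(x,p):=\mathbf{P}(W_n\leq0\text{ for some }n)$. Define functions $f_n:\mathbb{R}\times(0,1)\to\mathbb{R}$ by $f_0(x,p):=\mathbf{1}_{(-\infty,2]}(x)$ and $$f_{n+1}(x,p)=p\,f_n\!\left(\tfrac{x+1}{2},p\right)+(1-p)\,f_n(2x-2,p),\qquad n\in\mathbb{N}.$$ Then for every $x>2$, $f_n(x,\cdot)\to f(x,\cdot)$ locally uniformly on $(0,1/2)$, and for every $p\in(0,1/2)$, $f_n(\cdot,p)\to f(\cdot,p)$ locally uniformly on $(2,\infty)$. In particular, $$f(x,p)=p\,f\!\left(\tfrac{x+1}{2},p\right)+(1-p)\,f(2x-2,p)\qquad\text{for all }(x,p)\in(2,\infty)\times(0,1/2).$$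
   Context: $f(x,p)$ is the ruin probability of a gambler with initial fortune $x$ who starts by betting $1$, doubles the bet after each win and halves it after each loss, winning each round independently with probability $p$. *)

theory Defs
  imports "HOL-Probability.Probability"
begin

text \<open>Probability space of the coin flips: \<omega> n = True means \<xi>_(n+1) = 1
  (probability p), False means \<xi>_(n+1) = -1.\<close>
definition coin_space :: "real \<Rightarrow> (nat \<Rightarrow> bool) measure" where
  "coin_space p = (\<Pi>\<^sub>M n\<in>(UNIV::nat set). measure_pmf (bernoulli_pmf p))"

definition xi :: "(nat \<Rightarrow> bool) \<Rightarrow> nat \<Rightarrow> real" where
  "xi \<omega> n = (if \<omega> n then 1 else -1)"

text \<open>wealth_bet x \<omega> n = (W_n, B_(n+1)), with W_0 = x, B_1 = 1.\<close>
fun wealth_bet :: "real \<Rightarrow> (nat \<Rightarrow> bool) \<Rightarrow> nat \<Rightarrow> real \<times> real" where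
  "wealth_bet x \<omega> 0 = (x, 1)"
| "wealth_bet x \<omega> (Suc n) =
     (let (w, b) = wealth_bet x \<omega> n; s = xi \<omega> n in (w + s * b, b * 2 powr s))"

definition W :: "real \<Rightarrow> (nat \<Rightarrow> bool) \<Rightarrow> nat \<Rightarrow> real" where
  "W x \<omega> n = fst (wealth_bet x \<omega> n)"

definition ruin_prob :: "real \<Rightarrow> real \<Rightarrow> real" where
  "ruin_prob x p = measure (coin_space p) {\<omega> \<in> space (coin_space p). \<exists>n. W x \<omega> n \<le> 0}"

fun f_approx :: "nat \<Rightarrow> real \<Rightarrow> real \<Rightarrow> real" where
  "f_approx 0 x p = (if x \<le> 2 then 1 else 0)"
| "f_approx (Suc n) x p = p * f_approx n ((x + 1) / 2) p + (1 - p) * f_approx n (2 * x - 2) p"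

definition locally_uniform_limit :: "real set \<Rightarrow> (nat \<Rightarrow> real \<Rightarrow> real) \<Rightarrow> (real \<Rightarrow> real) \<Rightarrow> bool" where
  "locally_uniform_limit U F g \<longleftrightarrow>
     (\<forall>K. compact K \<and> K \<subseteq> U \<longrightarrow> uniform_limit K F g sequentially)"

end

theory Submission
  imports Defs "HOL-Real_Asymp.Real_Asymp"
begin

text \<open>
  The game is scale invariant: after a win the state (wealth \<open>x + 1\<close>, bet \<open>2\<close>) is the
  state \<open>((x + 1) / 2, 1)\<close> scaled by \<open>2\<close>, after a loss \<open>(x - 1, 1/2)\<close> is \<open>(2x - 2, 1)\<close>
  scaled by \<open>1/2\<close>. Conditioning on the first flip therefore gives the equation for \<open>f\<close>
  and the same recursion for the probability of ruin within \<open>n\<close> rounds, which starts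
  below \<open>f\<^sub>0\<close>. Since \<open>f = 1\<close> on \<open>(0, 2]\<close> (a contraction argument), \<open>f\<^sub>n \<le> f\<close>, so
  \<open>f\<^sub>n \<rightarrow> f\<close> pointwise.

  For \<open>p < 1/2\<close> the supersolution \<open>C / log\<^sub>2 (x - 1)\<close> shows \<open>f(x, p) \<rightarrow> 0\<close> as
  \<open>x \<rightarrow> \<infinity>\<close>. A maximum principle for the equation makes \<open>f(\<cdot>, p)\<close> its unique antitone
  solution with these boundary values. Uniqueness gives continuity in \<open>p\<close>, because
  monotone limits in \<open>p\<close> are again solutions. Applied to the jumps of \<open>f\<close>, the maximum
  principle gives continuity in \<open>x\<close>. Finally, \<open>f\<^sub>n\<close> is monotone in each variable and lies
  below the continuous limit, so a Dini-type argument makes the convergence locally uniform.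
\<close>

section \<open>First-step analysis\<close>

lemma sequence_space_bernoulli:
  assumes "0 \<le> p" "p \<le> 1"
  shows "sequence_space (measure_pmf (bernoulli_pmf p))"
  unfolding sequence_space_def product_prob_space_def product_prob_space_axioms_def
    product_sigma_finite_def
  by (auto simp: prob_space_measure_pmf prob_space_imp_sigma_finite)

lemma prob_space_coin_space:
  assumes "0 \<le> p" "p \<le> 1"
  shows "prob_space (coin_space p)"
proof -
  interpret sequence_space "measure_pmf (bernoulli_pmf p)"
    using sequence_space_bernoulli[OF assms] .
  show ?thesis
    unfolding coin_space_def by (rule P.prob_space_axioms)
qed

lemma space_coin_space [simp]: "space (coin_space p) = UNIV"
  by (simp add: coin_space_def space_PiM)

lemma emeasure_coin_space_first_step:
  assumes p: "0 \<le> p" "p \<le> 1" and A: "A \<in> sets (coin_space p)"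
  shows "emeasure (coin_space p) A =
           emeasure (coin_space p) {\<omega>. case_nat True \<omega> \<in> A} * p
         + emeasure (coin_space p) {\<omega>. case_nat False \<omega> \<in> A} * (1 - p)"
proof -
  interpret sequence_space "measure_pmf (bernoulli_pmf p)"
    using sequence_space_bernoulli[OF p] .
  let ?B = "measure_pmf (bernoulli_pmf p)"
  let ?cons = "\<lambda>(s, \<omega>). case_nat s \<omega>"
  have S: "coin_space p = S"
    by (simp add: coin_space_def)
  have A': "A \<in> sets S"
    using A S by simp
  have cons: "?cons \<in> measurable (?B \<Otimes>\<^sub>M S) S"
    by measurable
  have "emeasure S A = emeasure (distr (?B \<Otimes>\<^sub>M S) S ?cons) A"
    by (simp add: PiM_iter)
  also have "\<dots> = emeasure (?B \<Otimes>\<^sub>M S) (?cons -` A \<inter> space (?B \<Otimes>\<^sub>M S))"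
    by (rule emeasure_distr[OF cons A'])
  also have "\<dots> = (\<integral>\<^sup>+s. emeasure S (Pair s -` (?cons -` A \<inter> space (?B \<Otimes>\<^sub>M S))) \<partial>?B)"
    by (rule P.emeasure_pair_measure_alt) (rule measurable_sets[OF cons A'])
  also have "\<dots> = (\<integral>\<^sup>+s. emeasure S {\<omega>. case_nat s \<omega> \<in> A} \<partial>?B)"
    by (intro nn_integral_cong arg_cong2[where f = emeasure])
      (auto simp: space_pair_measure space_PiM)
  also have "\<dots> = emeasure S {\<omega>. case_nat True \<omega> \<in> A} * p
                 + emeasure S {\<omega>. case_nat False \<omega> \<in> A} * (1 - p)"
    using p by (subst nn_integral_measure_pmf_support[of UNIV]) (auto simp: UNIV_bool)
  finally show ?thesis
    using S by simp
qed

lemma measure_coin_space_first_step: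
  assumes p: "0 \<le> p" "p \<le> 1" and A: "A \<in> sets (coin_space p)"
  shows "measure (coin_space p) A =
           p * measure (coin_space p) {\<omega>. case_nat True \<omega> \<in> A}
         + (1 - p) * measure (coin_space p) {\<omega>. case_nat False \<omega> \<in> A}"
proof -
  interpret prob_space "coin_space p"
    using prob_space_coin_space[OF p] .
  show ?thesis
    using emeasure_coin_space_first_step[OF p A] p
    by (simp add: emeasure_eq_measure ennreal_mult'[symmetric] ennreal_plus[symmetric]
        del: ennreal_plus)
qed

lemma xi_measurable [measurable]: "(\<lambda>\<omega>. xi \<omega> n) \<in> borel_measurable (coin_space p)"
proof -
  have "(\<lambda>\<omega>. \<omega> n) \<in> measurable (coin_space p) (measure_pmf (bernoulli_pmf p))"
    by (simp add: coin_space_def measurable_component_singleton)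
  then have [measurable]: "Measurable.pred (coin_space p) (\<lambda>\<omega>. \<omega> n)"
    using measurable_cong_sets[OF refl sets_measure_pmf_count_space] by simp
  show ?thesis
    unfolding xi_def by measurable
qed

definition bet :: "real \<Rightarrow> (nat \<Rightarrow> bool) \<Rightarrow> nat \<Rightarrow> real" where
  "bet x \<omega> n = snd (wealth_bet x \<omega> n)"

lemma W_0 [simp]: "W x \<omega> 0 = x"
  and bet_0 [simp]: "bet x \<omega> 0 = 1"
  by (simp_all add: W_def bet_def)

lemma W_Suc: "W x \<omega> (Suc n) = W x \<omega> n + xi \<omega> n * bet x \<omega> n"
  and bet_Suc: "bet x \<omega> (Suc n) = bet x \<omega> n * 2 powr xi \<omega> n"
  by (simp_all add: W_def bet_def split_beta Let_def)

lemma W_measurable [measurable]: "(\<lambda>\<omega>. W x \<omega> n) \<in> borel_measurable (coin_space p)"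
proof -
  have "(\<lambda>\<omega>. W x \<omega> n) \<in> borel_measurable (coin_space p)
      \<and> (\<lambda>\<omega>. bet x \<omega> n) \<in> borel_measurable (coin_space p)"
  proof (induction n)
    case (Suc n)
    then have [measurable]: "(\<lambda>\<omega>. W x \<omega> n) \<in> borel_measurable (coin_space p)"
      "(\<lambda>\<omega>. bet x \<omega> n) \<in> borel_measurable (coin_space p)"
      by auto
    show ?case
      unfolding W_Suc bet_Suc by measurable
  qed simp
  then show ?thesis ..
qed

lemma W_after_win:
  "W x (case_nat True \<omega>) (Suc n) = 2 * W ((x + 1) / 2) \<omega> n
   \<and> bet x (case_nat True \<omega>) (Suc n) = 2 * bet ((x + 1) / 2) \<omega> n"
proof (induction n)
  case (Suc n)
  then show ?case
    by (simp add: W_Suc[of x _ "Suc n"] bet_Suc[of x _ "Suc n"] W_Suc[of _ \<omega> n]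
        bet_Suc[of _ \<omega> n] xi_def algebra_simps)
qed (simp add: W_Suc bet_Suc xi_def)

lemma W_after_loss:
  "W x (case_nat False \<omega>) (Suc n) = W (2 * x - 2) \<omega> n / 2
   \<and> bet x (case_nat False \<omega>) (Suc n) = bet (2 * x - 2) \<omega> n / 2"
proof (induction n)
  case (Suc n)
  then show ?case
    by (simp add: W_Suc[of x _ "Suc n"] bet_Suc[of x _ "Suc n"] W_Suc[of _ \<omega> n]
        bet_Suc[of _ \<omega> n] xi_def algebra_simps)
qed (simp add: W_Suc bet_Suc xi_def powr_minus_divide)

definition ruined_by :: "nat \<Rightarrow> real \<Rightarrow> (nat \<Rightarrow> bool) set" where
  "ruined_by n x = {\<omega>. \<exists>k\<le>n. W x \<omega> k \<le> 0}"

lemma ruined_by_sets [measurable]: "ruined_by n x \<in> sets (coin_space p)"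
proof -
  have "ruined_by n x = (\<Union>k\<le>n. {\<omega> \<in> space (coin_space p). W x \<omega> k \<le> 0})"
    by (auto simp: ruined_by_def)
  also have "\<dots> \<in> sets (coin_space p)"
    by measurable
  finally show ?thesis .
qed

lemma ex_le_Suc_iff: "(\<exists>k\<le>Suc n. P k) \<longleftrightarrow> P 0 \<or> (\<exists>k\<le>n. P (Suc k))"
  by (metis Suc_le_mono le0 not0_implies_Suc)

lemma ruined_by_after_win:
  "x > 0 \<Longrightarrow> {\<omega>. case_nat True \<omega> \<in> ruined_by (Suc n) x} = ruined_by n ((x + 1) / 2)"
  unfolding ruined_by_def by (auto simp: ex_le_Suc_iff W_after_win mult_le_0_iff)

lemma ruined_by_after_loss:
  "x > 0 \<Longrightarrow> {\<omega>. case_nat False \<omega> \<in> ruined_by (Suc n) x} = ruined_by n (2 * x - 2)"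
  unfolding ruined_by_def by (auto simp: ex_le_Suc_iff W_after_loss)

definition ruin_prob_upto :: "nat \<Rightarrow> real \<Rightarrow> real \<Rightarrow> real" where
  "ruin_prob_upto n x p = measure (coin_space p) (ruined_by n x)"

lemma ruin_prob_upto_nonpos:
  assumes "x \<le> 0" "0 \<le> p" "p \<le> 1"
  shows "ruin_prob_upto n x p = 1"
proof -
  interpret prob_space "coin_space p"
    using prob_space_coin_space assms(2,3) .
  have "ruined_by n x = space (coin_space p)"
    using assms(1) by (auto simp: ruined_by_def intro: exI[of _ 0])
  then show ?thesis
    using prob_space by (simp add: ruin_prob_upto_def)
qed

lemma ruin_prob_upto_0: "x > 0 \<Longrightarrow> ruin_prob_upto 0 x p = 0"
  by (simp add: ruin_prob_upto_def ruined_by_def)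

lemma ruin_prob_upto_Suc:
  "x > 0 \<Longrightarrow> 0 \<le> p \<Longrightarrow> p \<le> 1 \<Longrightarrow>
   ruin_prob_upto (Suc n) x p =
     p * ruin_prob_upto n ((x + 1) / 2) p + (1 - p) * ruin_prob_upto n (2 * x - 2) p"
  unfolding ruin_prob_upto_def
  by (subst measure_coin_space_first_step) (auto simp: ruined_by_after_win ruined_by_after_loss)

lemma ruin_prob_upto_tendsto:
  assumes "0 \<le> p" "p \<le> 1"
  shows "(\<lambda>n. ruin_prob_upto n x p) \<longlonglongrightarrow> ruin_prob x p"
proof -
  interpret prob_space "coin_space p"
    using prob_space_coin_space assms .
  have "(\<lambda>n. measure (coin_space p) (ruined_by n x))
          \<longlonglongrightarrow> measure (coin_space p) (\<Union>n. ruined_by n x)"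
  proof (rule finite_Lim_measure_incseq)
    show "range (\<lambda>n. ruined_by n x) \<subseteq> events"
      by auto
    show "incseq (\<lambda>n. ruined_by n x)"
      by (auto simp: incseq_def ruined_by_def intro: le_trans)
  qed
  moreover have "(\<Union>n. ruined_by n x) = {\<omega> \<in> space (coin_space p). \<exists>n. W x \<omega> n \<le> 0}"
    by (auto simp: ruined_by_def)
  ultimately show ?thesis
    by (simp add: ruin_prob_upto_def ruin_prob_def)
qed

lemma ruin_prob_bounds:
  assumes "0 \<le> p" "p \<le> 1"
  shows "0 \<le> ruin_prob x p" "ruin_prob x p \<le> 1"
proof -
  interpret prob_space "coin_space p"
    using prob_space_coin_space assms .
  show "0 \<le> ruin_prob x p" "ruin_prob x p \<le> 1"
    by (simp_all add: ruin_prob_def)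
qed

lemma ruin_prob_nonpos: "x \<le> 0 \<Longrightarrow> 0 \<le> p \<Longrightarrow> p \<le> 1 \<Longrightarrow> ruin_prob x p = 1"
  using LIMSEQ_unique[OF ruin_prob_upto_tendsto] ruin_prob_upto_nonpos by simp

lemma ruin_prob_first_step:
  assumes "x > 0" "0 \<le> p" "p \<le> 1"
  shows "ruin_prob x p = p * ruin_prob ((x + 1) / 2) p + (1 - p) * ruin_prob (2 * x - 2) p"
proof (rule LIMSEQ_unique)
  show "(\<lambda>n. ruin_prob_upto (Suc n) x p) \<longlonglongrightarrow> ruin_prob x p"
    using ruin_prob_upto_tendsto[OF assms(2,3)] by (rule LIMSEQ_Suc)
  show "(\<lambda>n. ruin_prob_upto (Suc n) x p)
          \<longlonglongrightarrow> p * ruin_prob ((x + 1) / 2) p + (1 - p) * ruin_prob (2 * x - 2) p"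
    unfolding ruin_prob_upto_Suc[OF assms] by (intro tendsto_intros ruin_prob_upto_tendsto assms)
qed

section \<open>Pointwise convergence of the approximations\<close>

lemma f_approx_le_2: "x \<le> 2 \<Longrightarrow> f_approx n x p = 1"
proof (induction n arbitrary: x)
  case (Suc n)
  then have "f_approx n ((x + 1) / 2) p = 1" "f_approx n (2 * x - 2) p = 1"
    by simp_all
  then show ?case
    by simp
qed simp

lemma f_approx_antimono:
  "0 \<le> p \<Longrightarrow> p \<le> 1 \<Longrightarrow> x \<le> y \<Longrightarrow> f_approx n y p \<le> f_approx n x p"
proof (induction n arbitrary: x y)
  case (Suc n)
  have "f_approx n ((y + 1) / 2) p \<le> f_approx n ((x + 1) / 2) p"
    "f_approx n (2 * y - 2) p \<le> f_approx n (2 * x - 2) p"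
    using Suc by simp_all
  then show ?case
    using Suc.prems by (simp add: add_mono mult_left_mono)
qed simp

lemma f_approx_mono_param:
  "0 \<le> p \<Longrightarrow> p \<le> q \<Longrightarrow> q \<le> 1 \<Longrightarrow> f_approx n x p \<le> f_approx n x q"
proof (induction n arbitrary: x)
  case (Suc n)
  let ?a = "f_approx n ((x + 1) / 2)" and ?b = "f_approx n (2 * x - 2)"
  have "?b p \<le> ?a p"
  proof (cases "x \<ge> 5 / 3")
    case True
    then show ?thesis
      using f_approx_antimono[of p "(x + 1) / 2" "2 * x - 2"] Suc.prems by simp
  next
    case False
    then show ?thesis
      using f_approx_le_2[of "(x + 1) / 2"] f_approx_le_2[of "2 * x - 2"] by simp
  qed
  then have "0 \<le> (q - p) * (?a p - ?b p)"
    using Suc.prems by simp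
  then have "p * ?a p + (1 - p) * ?b p \<le> q * ?a p + (1 - q) * ?b p"
    by (simp add: algebra_simps)
  also have "\<dots> \<le> q * ?a q + (1 - q) * ?b q"
    using Suc by (intro add_mono mult_left_mono) auto
  finally show ?case
    by simp
qed simp

lemma ruin_prob_upto_le_f_approx:
  "0 \<le> p \<Longrightarrow> p \<le> 1 \<Longrightarrow> ruin_prob_upto n x p \<le> f_approx n x p"
proof (induction n arbitrary: x)
  case 0
  then show ?case
    by (cases "x \<le> 0") (auto simp: ruin_prob_upto_nonpos ruin_prob_upto_0)
next
  case (Suc n)
  show ?case
  proof (cases "x \<le> 0")
    case True
    then show ?thesis
      using Suc.prems by (simp add: ruin_prob_upto_nonpos f_approx_le_2)
  next
    case False
    have "ruin_prob_upto n ((x + 1) / 2) p \<le> f_approx n ((x + 1) / 2) p"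
      "ruin_prob_upto n (2 * x - 2) p \<le> f_approx n (2 * x - 2) p"
      using Suc by simp_all
    then show ?thesis
      using False Suc.prems by (simp add: ruin_prob_upto_Suc add_mono mult_left_mono)
  qed
qed

lemma nonpos_if_contracting_bounds:
  fixes u :: "'a \<Rightarrow> real"
  assumes c: "0 \<le> c" "c < 1"
    and le_1: "\<And>y. y \<in> S \<Longrightarrow> u y \<le> 1"
    and contract: "\<And>M. 0 \<le> M \<Longrightarrow> \<forall>y\<in>S. u y \<le> M \<Longrightarrow> \<forall>y\<in>S. u y \<le> c * M"
    and y: "y \<in> S"
  shows "u y \<le> 0"
proof -
  have "\<forall>y\<in>S. u y \<le> c ^ k" for k
  proof (induction k)
    case (Suc k)
    then show ?case
      using contract[of "c ^ k"] c by simp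
  qed (use le_1 in simp)
  then show ?thesis
    using LIMSEQ_le_const[OF LIMSEQ_power_zero[of c], of "u y"] c y by auto
qed

lemma escape_rate_bounds:
  fixes p :: real
  assumes "0 \<le> p" "p \<le> 1"
  shows "p \<le> 1 - p * (1 - p)^2" "p * (2 - p) \<le> 1 - p * (1 - p)^2"
proof -
  have "0 \<le> (1 - p) * (1 - p + p^2)" "0 \<le> (1 - p)^3"
    using assms by (simp_all add: power2_eq_square add_nonneg_nonneg)
  then show "p \<le> 1 - p * (1 - p)^2" "p * (2 - p) \<le> 1 - p * (1 - p)^2"
    by (simp_all add: power2_eq_square power3_eq_cube algebra_simps)
qed

lemma ruin_prob_escape_contraction:
  fixes p M :: real
  assumes p: "0 < p" "p < 1" and M: "0 \<le> M"
    and bound: "\<forall>y\<in>{0<..2}. 1 - ruin_prob y p \<le> M"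
  shows "\<forall>y\<in>{0<..2}. 1 - ruin_prob y p \<le> (1 - p * (1 - p)^2) * M"
proof
  let ?u = "\<lambda>y. 1 - ruin_prob y p"
  have step: "?u y = p * ?u ((y + 1) / 2) + (1 - p) * ?u (2 * y - 2)" if "y > 0" for y
    using ruin_prob_first_step[of y p] p that by (simp add: algebra_simps)
  \<comment> \<open>From \<open>(0,1]\<close> a loss ruins, from \<open>(1,3/2]\<close> a loss leads into \<open>(0,1]\<close>, and from
    \<open>(3/2,2]\<close> a win leads into \<open>(5/4,3/2]\<close>.\<close>
  have low: "?u y \<le> p * M" if "0 < y" "y \<le> 1" for y
    using step[of y] ruin_prob_nonpos[of "2 * y - 2" p] bound that p
    by (simp add: mult_left_mono)
  have mid: "?u y \<le> p * (2 - p) * M" if "1 < y" "y \<le> 3 / 2" for y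
  proof -
    have "?u y = p * ?u ((y + 1) / 2) + (1 - p) * ?u (2 * y - 2)"
      using step that by simp
    also have "\<dots> \<le> p * M + (1 - p) * (p * M)"
      using low[of "2 * y - 2"] bound that p by (intro add_mono mult_left_mono) auto
    finally show ?thesis
      by (simp add: algebra_simps)
  qed
  have rates: "p \<le> 1 - p * (1 - p)^2" "p * (2 - p) \<le> 1 - p * (1 - p)^2"
    using escape_rate_bounds[of p] p by simp_all
  fix y :: real
  assume y: "y \<in> {0<..2}"
  consider "y \<le> 1" | "1 < y" "y \<le> 3 / 2" | "3 / 2 < y"
    by linarith
  then show "?u y \<le> (1 - p * (1 - p)^2) * M"
  proof cases
    case 1
    then show ?thesis
      using low[of y] y mult_right_mono[OF rates(1) M] by simp
  next
    case 2
    then show ?thesis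
      using mid[of y] mult_right_mono[OF rates(2) M] by simp
  next
    case 3
    have "?u y = p * ?u ((y + 1) / 2) + (1 - p) * ?u (2 * y - 2)"
      using step y by simp
    also have "\<dots> \<le> p * (p * (2 - p) * M) + (1 - p) * M"
      using mid[of "(y + 1) / 2"] bound y 3 p by (intro add_mono mult_left_mono) auto
    finally show ?thesis
      by (simp add: power2_eq_square algebra_simps)
  qed
qed

lemma ruin_prob_le_2:
  assumes p: "0 < p" "p < 1" and x: "x \<le> 2"
  shows "ruin_prob x p = 1"
proof (cases "x \<le> 0")
  case True
  then show ?thesis
    using ruin_prob_nonpos p by simp
next
  case False
  have "p * (1 - p)^2 \<le> 1"
    using p by (intro mult_le_one) (auto simp: power_le_one)
  then have "1 - ruin_prob x p \<le> 0"
    using False x p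
    by (intro nonpos_if_contracting_bounds[where S = "{0<..2}" and c = "1 - p * (1 - p)^2"]
        ruin_prob_escape_contraction) (auto simp: ruin_prob_bounds)
  then show ?thesis
    using ruin_prob_bounds[of p x] p by simp
qed

lemma f_approx_le_ruin_prob: "0 < p \<Longrightarrow> p < 1 \<Longrightarrow> f_approx n x p \<le> ruin_prob x p"
proof (induction n arbitrary: x)
  case 0
  then show ?case
    using ruin_prob_bounds[of p x] ruin_prob_le_2[of p x] by auto
next
  case (Suc n)
  show ?case
  proof (cases "x \<le> 2")
    case True
    then show ?thesis
      using Suc.prems by (simp add: f_approx_le_2 ruin_prob_le_2)
  next
    case False
    have "f_approx n ((x + 1) / 2) p \<le> ruin_prob ((x + 1) / 2) p"
      "f_approx n (2 * x - 2) p \<le> ruin_prob (2 * x - 2) p"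
      using Suc by simp_all
    then show ?thesis
      using ruin_prob_first_step[of x p] Suc.prems False by (simp add: add_mono mult_left_mono)
  qed
qed

lemma f_approx_tendsto: "0 < p \<Longrightarrow> p < 1 \<Longrightarrow> (\<lambda>n. f_approx n x p) \<longlonglongrightarrow> ruin_prob x p"
  by (rule tendsto_sandwich[OF _ _ ruin_prob_upto_tendsto tendsto_const])
    (simp_all add: ruin_prob_upto_le_f_approx f_approx_le_ruin_prob)

lemma ruin_prob_antimono: "0 < p \<Longrightarrow> p < 1 \<Longrightarrow> x \<le> y \<Longrightarrow> ruin_prob y p \<le> ruin_prob x p"
  by (rule LIMSEQ_le[OF f_approx_tendsto f_approx_tendsto]) (auto intro!: exI[of _ 0] f_approx_antimono)

lemma ruin_prob_mono_param: "0 < p \<Longrightarrow> p \<le> q \<Longrightarrow> q < 1 \<Longrightarrow> ruin_prob x p \<le> ruin_prob x q"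
  by (rule LIMSEQ_le[OF f_approx_tendsto f_approx_tendsto]) (auto intro!: exI[of _ 0] f_approx_mono_param)

section \<open>Decay of the ruin probability for large wealth\<close>

lemma ruin_prob_le_supersolution:
  assumes p: "0 \<le> p" "p \<le> 1"
    and boundary: "\<And>x. x \<le> 0 \<Longrightarrow> 1 \<le> \<psi> x"
    and nonneg: "\<And>x. 0 \<le> \<psi> x"
    and super: "\<And>x. 0 < x \<Longrightarrow> p * \<psi> ((x + 1) / 2) + (1 - p) * \<psi> (2 * x - 2) \<le> \<psi> x"
  shows "ruin_prob x p \<le> \<psi> x"
proof -
  have "ruin_prob_upto n x p \<le> \<psi> x" for n
  proof (induction n arbitrary: x)
    case 0
    then show ?case
      using boundary nonneg p by (cases "x \<le> 0") (auto simp: ruin_prob_upto_nonpos ruin_prob_upto_0)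
  next
    case (Suc n)
    show ?case
    proof (cases "x \<le> 0")
      case True
      then show ?thesis
        using boundary p by (simp add: ruin_prob_upto_nonpos)
    next
      case False
      then have "ruin_prob_upto (Suc n) x p
          = p * ruin_prob_upto n ((x + 1) / 2) p + (1 - p) * ruin_prob_upto n (2 * x - 2) p"
        using p by (simp add: ruin_prob_upto_Suc)
      also have "\<dots> \<le> p * \<psi> ((x + 1) / 2) + (1 - p) * \<psi> (2 * x - 2)"
        using Suc.IH p by (intro add_mono mult_left_mono) auto
      also have "\<dots> \<le> \<psi> x"
        using super False by simp
      finally show ?thesis .
    qed
  qed
  then show ?thesis
    using LIMSEQ_le_const2[OF ruin_prob_upto_tendsto[OF p]] by blast
qed

lemma one_plus_half_le_two_powr: "0 \<le> d \<Longrightarrow> 1 + d / 2 \<le> 2 powr (d::real)"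
proof -
  assume d: "0 \<le> d"
  have "1 / 2 \<le> ln (2::real)"
    using ln2_ge_two_thirds by simp
  then have "d / 2 \<le> d * ln 2"
    using d mult_left_mono by fastforce
  also have "1 + d * ln 2 \<le> exp (d * ln 2)"
    by (rule exp_ge_add_one_self)
  finally show ?thesis
    by (simp add: powr_def)
qed

lemma log2_double_minus_one_ge:
  fixes d y :: real
  assumes d: "0 < d" "d \<le> 1" and y: "2 / d \<le> y"
  shows "log 2 y + (1 - d) \<le> log 2 (2 * y - 1)"
proof -
  have "2 \<le> 2 / d"
    using d by (simp add: field_simps)
  then have y_pos: "0 < y" and y_half: "1 < 2 * y - 1"
    using y by linarith+
  have "2 powr (1 - d) = 2 / 2 powr d"
    by (simp add: powr_diff)
  also have "\<dots> \<le> 2 / (1 + d / 2)"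
    using one_plus_half_le_two_powr[of d] d by (intro divide_left_mono) auto
  also have "\<dots> \<le> 2 - d / 2"
    using d by (simp add: field_simps)
  also have "\<dots> \<le> (2 * y - 1) / y"
    using d y y_pos by (simp add: field_simps)
  finally have "1 - d \<le> log 2 ((2 * y - 1) / y)"
    using y_pos y_half by (subst le_log_iff) auto
  also have "\<dots> = log 2 (2 * y - 1) - log 2 y"
    using y_pos y_half by (subst log_divide_pos) auto
  finally show ?thesis
    by simp
qed

lemma log_supersolution_inequality:
  fixes b l :: real
  assumes b: "0 < b" "b < 1 / 2" and l: "2 \<le> l * (1 - 2 * b)"
  shows "b / (l - 1) + (1 - b) / (l + (1 + 2 * b) / 2) \<le> 1 / l"
proof -
  define \<mu> where "\<mu> = (1 + 2 * b) / 2"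
  have l1: "l > 1"
  proof (rule ccontr)
    assume "\<not> l > 1"
    then have "l * (1 - 2 * b) \<le> 1 * (1 - 2 * b)"
      using b by (intro mult_right_mono) auto
    then have "2 \<le> 1 - 2 * b"
      using l by simp
    then show False
      using b by simp
  qed
  have \<mu>: "\<mu> > 0"
    using b by (simp add: \<mu>_def)
  have "\<mu> \<le> 1 + b"
    using b by (simp add: \<mu>_def)
  also have "2 * (1 + b) \<le> l * (1 - 2 * b) * (1 + b)"
    using l b by (intro mult_right_mono) auto
  then have "1 + b \<le> l * (1 - 2 * b) * (1 + b) / 2"
    by simp
  also have "\<dots> = l * ((1 - b) * \<mu> - b)"
    by (simp add: \<mu>_def field_simps)
  finally have key: "\<mu> \<le> l * ((1 - b) * \<mu> - b)" .
  have "1 / l - b / (l - 1) - (1 - b) / (l + \<mu>)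
        = (l * ((1 - b) * \<mu> - b) - \<mu>) / (l * (l - 1) * (l + \<mu>))"
    using l1 \<mu> by (simp add: field_simps)
  moreover have "0 \<le> (l * ((1 - b) * \<mu> - b) - \<mu>) / (l * (l - 1) * (l + \<mu>))"
    using key l1 \<mu> by simp
  ultimately show ?thesis
    by (simp add: \<mu>_def)
qed

definition log_barrier :: "real \<Rightarrow> real \<Rightarrow> real" where
  "log_barrier X x = (if x \<le> X then 1 else log 2 (X - 1) / log 2 (x - 1))"

lemma log_barrier_le_1: "2 < X \<Longrightarrow> log_barrier X x \<le> 1"
  by (simp add: log_barrier_def)

lemma log_barrier_nonneg: "2 < X \<Longrightarrow> 0 \<le> log_barrier X x"
  by (simp add: log_barrier_def)

lemma log_barrier_le:
  assumes "2 < X" "2 < y"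
  shows "log_barrier X y \<le> log 2 (X - 1) / log 2 (y - 1)"
  using assms by (simp add: log_barrier_def)

lemma log_barrier_supersolution_far:
  fixes p X x :: real
  assumes p: "0 < p" "p < 1 / 2" and X: "3 < X" "X < x"
    and x: "4 / (1 - 2 * p) \<le> x - 1" "2 powr (2 / (1 - 2 * p)) \<le> x - 1"
  shows "p * log_barrier X ((x + 1) / 2) + (1 - p) * log_barrier X (2 * x - 2) \<le> log_barrier X x"
proof -
  \<comment> \<open>With \<open>l = log 2 (x - 1)\<close>, halving \<open>x - 1\<close> lowers \<open>l\<close> by \<open>1\<close> and doubling it raises \<open>l\<close>
    by at least \<open>(1 + 2p) / 2\<close>; then \<open>log_supersolution_inequality\<close> applies.\<close>
  define d where "d = (1 - 2 * p) / 2"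
  define K where "K = log 2 (X - 1)"
  define l where "l = log 2 (x - 1)"
  have d: "0 < d" "d \<le> 1" "2 / d \<le> x - 1" "2 powr (1 / d) \<le> x - 1"
    using p x by (simp_all add: d_def)
  have K: "K > 0"
    using X by (simp add: K_def)
  have "1 / d \<le> l"
    using d X by (simp add: l_def le_log_iff)
  then have "1 \<le> l * d"
    using d(1) by (simp add: pos_divide_le_eq)
  then have l: "2 \<le> l * (1 - 2 * p)"
    by (simp add: d_def)
  have "log 2 ((x + 1) / 2 - 1) = l - 1"
    using X by (simp add: l_def log_divide_pos diff_divide_distrib[symmetric])
  then have win: "log_barrier X ((x + 1) / 2) \<le> K / (l - 1)"
    using log_barrier_le[of X "(x + 1) / 2"] X by (simp add: K_def)
  have "l + (1 + 2 * p) / 2 \<le> log 2 (2 * x - 2 - 1)"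
    using log2_double_minus_one_ge[OF d(1-3)] by (simp add: l_def d_def field_simps)
  moreover have "0 < l + (1 + 2 * p) / 2"
    using X p by (simp add: l_def add_pos_pos)
  ultimately have "K / log 2 (2 * x - 2 - 1) \<le> K / (l + (1 + 2 * p) / 2)"
    using K by (intro divide_left_mono) auto
  then have loss: "log_barrier X (2 * x - 2) \<le> K / (l + (1 + 2 * p) / 2)"
    using log_barrier_le[of X "2 * x - 2"] X by (simp add: K_def)
  have "p * log_barrier X ((x + 1) / 2) + (1 - p) * log_barrier X (2 * x - 2)
        \<le> K * (p / (l - 1) + (1 - p) / (l + (1 + 2 * p) / 2))"
    using mult_left_mono[OF win, of p] mult_left_mono[OF loss, of "1 - p"] p
    by (simp add: algebra_simps)
  also have "\<dots> \<le> K * (1 / l)"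
    using log_supersolution_inequality[OF p l] K by (intro mult_left_mono) auto
  finally show ?thesis
    using X by (simp add: log_barrier_def K_def l_def)
qed

lemma log_barrier_supersolution:
  fixes p X :: real
  assumes p: "0 < p" "p < 1 / 2"
    and X: "3 + 4 / (1 - 2 * p) \<le> X" "3 + 2 powr (2 / (1 - 2 * p)) \<le> X"
  shows "p * log_barrier X ((x + 1) / 2) + (1 - p) * log_barrier X (2 * x - 2) \<le> log_barrier X x"
proof -
  have "0 < 4 / (1 - 2 * p)" "0 < 2 powr (2 / (1 - 2 * p))"
    using p by simp_all
  then have "3 < X"
    using X by linarith
  show ?thesis
  proof (cases "x \<le> X")
    case True
    have "p * log_barrier X ((x + 1) / 2) + (1 - p) * log_barrier X (2 * x - 2) \<le> p + (1 - p)"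
      using p log_barrier_le_1 \<open>3 < X\<close> by (intro add_mono mult_left_le) auto
    then show ?thesis
      using True by (simp add: log_barrier_def)
  next
    case False
    then show ?thesis
      using p X \<open>3 < X\<close> by (intro log_barrier_supersolution_far) auto
  qed
qed

lemma ruin_prob_tendsto_0:
  assumes p: "0 < p" "p < 1 / 2"
  shows "((\<lambda>x. ruin_prob x p) \<longlongrightarrow> 0) at_top"
proof -
  define X where "X = 3 + max (4 / (1 - 2 * p)) (2 powr (2 / (1 - 2 * p)))"
  have "0 < 4 / (1 - 2 * p)"
    using p by simp
  moreover have "4 / (1 - 2 * p) \<le> X - 3" "2 powr (2 / (1 - 2 * p)) \<le> X - 3"
    by (simp_all add: X_def)
  ultimately have X: "3 + 4 / (1 - 2 * p) \<le> X" "3 + 2 powr (2 / (1 - 2 * p)) \<le> X" "2 < X"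
    by linarith+
  have le_barrier: "ruin_prob x p \<le> log_barrier X x" for x
    using p X by (intro ruin_prob_le_supersolution log_barrier_supersolution log_barrier_nonneg)
      (auto simp: log_barrier_def)
  have upper: "eventually (\<lambda>x. ruin_prob x p \<le> log 2 (X - 1) / log 2 (x - 1)) at_top"
    using eventually_gt_at_top[of X]
  proof eventually_elim
    case (elim x)
    then show ?case
      using le_barrier[of x] by (simp add: log_barrier_def)
  qed
  have lower: "eventually (\<lambda>x. 0 \<le> ruin_prob x p) at_top"
    using p by (simp add: ruin_prob_bounds)
  have "((\<lambda>x. log 2 (X - 1) / log 2 (x - 1)) \<longlongrightarrow> 0) at_top"
    by real_asymp
  then show ?thesis
    by (rule tendsto_sandwich[OF lower upper tendsto_const])
qed

section \<open>Maximum principle and uniqueness of solutions\<close>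

lemma subsolution_doubling_defect:
  fixes w :: "real \<Rightarrow> real"
  assumes p: "0 \<le> p" "p < 1" and le_M: "\<And>y. w y \<le> M"
    and sub: "\<And>x. 2 < x \<Longrightarrow> w x \<le> p * w ((x + 1) / 2) + (1 - p) * w (2 * x - 2)"
    and x: "2 < x"
  shows "(1 - p) ^ j * (M - w (2 + 2 ^ j * (x - 2))) \<le> M - w x"
proof (induction j)
  case (Suc j)
  define y where "y = 2 + 2 ^ j * (x - 2)"
  have "2 < y"
    using x by (simp add: y_def)
  then have "w y \<le> p * w ((y + 1) / 2) + (1 - p) * w (2 * y - 2)"
    by (rule sub)
  also have "\<dots> \<le> p * M + (1 - p) * w (2 * y - 2)"
    using le_M p by (intro add_mono mult_left_mono) auto
  finally have "(1 - p) * (M - w (2 * y - 2)) \<le> M - w y"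
    by (simp add: algebra_simps)
  then have step: "(1 - p) ^ Suc j * (M - w (2 * y - 2)) \<le> (1 - p) ^ j * (M - w y)"
    using p by (simp add: mult_left_mono mult.assoc)
  have "2 * y - 2 = 2 + 2 ^ Suc j * (x - 2)"
    by (simp add: y_def algebra_simps)
  then show ?case
    using order_trans[OF step Suc.IH[folded y_def]] by simp
qed simp

lemma subsolution_nonpos:
  fixes w :: "real \<Rightarrow> real"
  assumes p: "0 \<le> p" "p < 1"
    and bdd: "bdd_above (range w)"
    and boundary: "\<And>x. x \<le> 2 \<Longrightarrow> w x \<le> 0"
    and sub: "\<And>x. 2 < x \<Longrightarrow> w x \<le> p * w ((x + 1) / 2) + (1 - p) * w (2 * x - 2)"
    and near_2: "\<And>e. 0 < e \<Longrightarrow> eventually (\<lambda>x. w x < e) (at_right 2)"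
    and tail: "\<And>e. 0 < e \<Longrightarrow> eventually (\<lambda>x. w x < e) at_top"
  shows "w x \<le> 0"
proof (rule ccontr)
  define M where "M = (SUP x. w x)"
  have le_M: "w y \<le> M" for y
    using bdd by (simp add: M_def cSUP_upper)
  assume "\<not> w x \<le> 0"
  then have M: "0 < M"
    using le_M[of x] by simp
  obtain b where b: "2 < b" "\<And>y. 2 < y \<Longrightarrow> y < b \<Longrightarrow> w y < M / 2"
    using near_2[of "M / 2"] M by (auto simp: eventually_at_right_field)
  obtain R where R: "\<And>y. R \<le> y \<Longrightarrow> w y < M / 2"
    using tail[of "M / 2"] M by (auto simp: eventually_at_top_linorder)
  obtain k :: nat where k: "R / (b - 2) < 2 ^ k"
    using real_arch_pow[of 2 "R / (b - 2)"] by auto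
  \<comment> \<open>A point \<open>x0\<close> where \<open>w\<close> is close enough to its supremum lies beyond \<open>b\<close>; doubling its
    distance to \<open>2\<close> \<open>k\<close> times reaches \<open>[R, \<infinity>)\<close> while keeping \<open>w\<close> above \<open>M / 2\<close>.\<close>
  obtain x0 where x0: "M - M / 2 * (1 - p) ^ k < w x0"
    using less_cSUP_iff[OF _ bdd, of "M - M / 2 * (1 - p) ^ k"] M p by (auto simp: M_def)
  have "M / 2 * (1 - p) ^ k \<le> M / 2"
    using M p by (simp add: power_le_one mult_left_le)
  then have "M / 2 < w x0"
    using x0 by linarith
  then have "b \<le> x0"
    using M boundary[of x0] b(2)[of x0] by force
  have "R \<le> 2 + 2 ^ k * (x0 - 2)"
  proof -
    have "R < 2 ^ k * (b - 2)"
      using k b by (simp add: divide_less_eq)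
    also have "\<dots> \<le> 2 ^ k * (x0 - 2)"
      using \<open>b \<le> x0\<close> by simp
    finally show ?thesis
      by simp
  qed
  moreover have "(1 - p) ^ k * (M - w (2 + 2 ^ k * (x0 - 2))) < (1 - p) ^ k * (M / 2)"
    using subsolution_doubling_defect[OF p le_M sub, of x0 k] x0 b \<open>b \<le> x0\<close>
    by (simp add: algebra_simps)
  then have "M / 2 < w (2 + 2 ^ k * (x0 - 2))"
    using p by (simp add: mult_less_cancel_left_pos)
  ultimately show False
    using R by fastforce
qed

locale ruin_solution =
  fixes p :: real and \<phi> :: "real \<Rightarrow> real"
  assumes param: "0 < p" "p < 1"
    and boundary: "\<And>x. x \<le> 2 \<Longrightarrow> \<phi> x = 1"
    and equation: "\<And>x. 2 < x \<Longrightarrow> \<phi> x = p * \<phi> ((x + 1) / 2) + (1 - p) * \<phi> (2 * x - 2)"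
    and antimono: "antimono \<phi>"
    and tendsto_0: "(\<phi> \<longlongrightarrow> 0) at_top"
begin

lemma nonneg: "0 \<le> \<phi> x"
  using antimono
  by (intro tendsto_upperbound[OF tendsto_0])
    (auto simp: eventually_at_top_linorder antimono_def)

lemma le_1: "\<phi> x \<le> 1"
  using antimonoD[OF antimono, of "min x 2" x] boundary[of "min x 2"] by simp

lemma near_2: "0 < \<eta> \<Longrightarrow> \<eta> \<le> 1 / 2 ^ k \<Longrightarrow> 1 - \<phi> (2 + \<eta>) \<le> (1 - p) ^ k"
proof (induction k arbitrary: \<eta>)
  case 0
  then show ?case
    using nonneg by simp
next
  case (Suc k)
  have "\<eta> \<le> 1"
    using Suc.prems by (smt (verit) one_le_power divide_le_eq_1)
  then have "1 - \<phi> (2 + \<eta>) = (1 - p) * (1 - \<phi> (2 + 2 * \<eta>))"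
    using equation[of "2 + \<eta>"] boundary[of "(2 + \<eta> + 1) / 2"] Suc.prems
    by (simp add: algebra_simps)
  also have "\<dots> \<le> (1 - p) * (1 - p) ^ k"
    using Suc.IH[of "2 * \<eta>"] Suc.prems param by (intro mult_left_mono) (auto simp: field_simps)
  finally show ?case
    by simp
qed

lemma eventually_near_2: "0 < e \<Longrightarrow> eventually (\<lambda>x. 1 - \<phi> x < e) (at_right 2)"
proof -
  assume e: "0 < e"
  obtain k where k: "(1 - p) ^ k < e"
    using real_arch_pow_inv[OF e, of "1 - p"] param by auto
  have "1 - \<phi> x < e" if "2 < x" "x < 2 + 1 / 2 ^ k" for x
    using near_2[of "x - 2" k] that k by simp
  then show ?thesis
    unfolding eventually_at_right_field by (intro exI[of _ "2 + 1 / 2 ^ k"]) auto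
qed

lemma le_solution:
  assumes "ruin_solution p \<psi>"
  shows "\<phi> x \<le> \<psi> x"
proof -
  interpret \<psi>: ruin_solution p \<psi>
    by (fact assms)
  have "\<phi> x - \<psi> x \<le> 0"
  proof (rule subsolution_nonpos[where p = p and w = "\<lambda>x. \<phi> x - \<psi> x"])
    have "\<phi> x - \<psi> x \<le> 1" for x
      using le_1[of x] \<psi>.nonneg[of x] by linarith
    then show "bdd_above (range (\<lambda>x. \<phi> x - \<psi> x))"
      by (intro bdd_aboveI2)
    show "\<phi> x - \<psi> x \<le> p * (\<phi> ((x + 1) / 2) - \<psi> ((x + 1) / 2))
                      + (1 - p) * (\<phi> (2 * x - 2) - \<psi> (2 * x - 2))" if "2 < x" for x
      using equation[OF that] \<psi>.equation[OF that] by (simp add: algebra_simps)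
    show "eventually (\<lambda>x. \<phi> x - \<psi> x < e) (at_right 2)" if "0 < e" for e
      using \<psi>.eventually_near_2[OF that] by eventually_elim (use le_1 in \<open>smt (verit)\<close>)
    show "eventually (\<lambda>x. \<phi> x - \<psi> x < e) at_top" if "0 < e" for e
      using order_tendstoD(2)[OF tendsto_0 that] by eventually_elim (use \<psi>.nonneg in \<open>smt (verit)\<close>)
  qed (use param boundary \<psi>.boundary in auto)
  then show ?thesis
    by simp
qed

definition osc :: "real \<Rightarrow> real \<Rightarrow> real" where
  "osc \<delta> x = \<phi> (x - \<delta>) - \<phi> (x + \<delta>)"

definition jump :: "real \<Rightarrow> real" where
  "jump x = (INF \<delta>\<in>{0<..}. osc \<delta> x)"

lemma osc_nonneg: "0 \<le> \<delta> \<Longrightarrow> 0 \<le> osc \<delta> x"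
  unfolding osc_def using antimonoD[OF antimono, of "x - \<delta>" "x + \<delta>"] by simp

lemma osc_mono: "0 \<le> \<delta> \<Longrightarrow> \<delta> \<le> \<delta>' \<Longrightarrow> osc \<delta> x \<le> osc \<delta>' x"
  unfolding osc_def
  using antimonoD[OF antimono, of "x - \<delta>'" "x - \<delta>"] antimonoD[OF antimono, of "x + \<delta>" "x + \<delta>'"]
  by simp

lemma bdd_below_osc: "bdd_below ((\<lambda>\<delta>. osc \<delta> x) ` {0<..})"
  by (rule bdd_belowI[of _ 0]) (auto intro: osc_nonneg)

lemma jump_le_osc: "0 < \<delta> \<Longrightarrow> jump x \<le> osc \<delta> x"
  unfolding jump_def by (rule cINF_lower[OF bdd_below_osc]) simp

lemma jump_nonneg: "0 \<le> jump x"
  unfolding jump_def by (rule cINF_greatest) (auto intro: osc_nonneg)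

lemma osc_close_to_jump: "0 < e \<Longrightarrow> \<exists>\<delta>>0. osc \<delta> x < jump x + e"
proof -
  assume "0 < e"
  then have "jump x < jump x + e"
    by simp
  then show ?thesis
    unfolding jump_def[of x] by (subst (asm) cINF_less_iff[OF _ bdd_below_osc]) auto
qed

lemma jump_subsolution:
  assumes x: "2 < x"
  shows "jump x \<le> p * jump ((x + 1) / 2) + (1 - p) * jump (2 * x - 2)"
proof (rule field_le_epsilon)
  fix e :: real
  assume e: "0 < e"
  obtain \<delta>1 where \<delta>1: "0 < \<delta>1" "osc \<delta>1 ((x + 1) / 2) < jump ((x + 1) / 2) + e"
    using osc_close_to_jump[OF e] by blast
  obtain \<delta>2 where \<delta>2: "0 < \<delta>2" "osc \<delta>2 (2 * x - 2) < jump (2 * x - 2) + e"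
    using osc_close_to_jump[OF e] by blast
  define \<delta> where "\<delta> = min (min (2 * \<delta>1) (\<delta>2 / 2)) ((x - 2) / 2)"
  have "\<delta> \<le> (x - 2) / 2"
    unfolding \<delta>_def by (rule min.cobounded2)
  then have \<delta>: "0 < \<delta>" "\<delta> / 2 \<le> \<delta>1" "2 * \<delta> \<le> \<delta>2" "2 < x - \<delta>"
    using \<delta>1 \<delta>2 x by (auto simp: \<delta>_def)
  \<comment> \<open>The equation maps \<open>[x - \<delta>, x + \<delta>]\<close> onto intervals of radius \<open>\<delta>/2\<close> and \<open>2\<delta>\<close>.\<close>
  have "osc \<delta> x = p * osc (\<delta> / 2) ((x + 1) / 2) + (1 - p) * osc (2 * \<delta>) (2 * x - 2)"
    using equation[of "x - \<delta>"] equation[of "x + \<delta>"] \<delta>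
    by (simp add: osc_def algebra_simps add_divide_distrib diff_divide_distrib)
  also have "\<dots> \<le> p * (jump ((x + 1) / 2) + e) + (1 - p) * (jump (2 * x - 2) + e)"
    using osc_mono[of "\<delta> / 2" \<delta>1 "(x + 1) / 2"] osc_mono[of "2 * \<delta>" \<delta>2 "2 * x - 2"] \<delta>1 \<delta>2 \<delta> param
    by (intro add_mono mult_left_mono) auto
  also have "\<dots> = p * jump ((x + 1) / 2) + (1 - p) * jump (2 * x - 2) + e"
    by (simp add: algebra_simps)
  finally show "jump x \<le> p * jump ((x + 1) / 2) + (1 - p) * jump (2 * x - 2) + e"
    using jump_le_osc[OF \<delta>(1), of x] by simp
qed

lemma jump_boundary: "x \<le> 2 \<Longrightarrow> jump x \<le> 0"
proof (rule field_le_epsilon)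
  fix e :: real
  assume "x \<le> 2" "0 < e"
  obtain k where k: "(1 - p) ^ k < e"
    using real_arch_pow_inv[OF \<open>0 < e\<close>, of "1 - p"] param by auto
  have "jump x \<le> osc (2 - x + 1 / 2 ^ k) x"
    using \<open>x \<le> 2\<close> by (intro jump_le_osc) (simp add: add_nonneg_pos)
  also have "\<dots> = 1 - \<phi> (2 + 1 / 2 ^ k)"
  proof -
    have "0 < (1::real) / 2 ^ k"
      by simp
    then have "x - (2 - x + 1 / 2 ^ k) \<le> 2"
      using \<open>x \<le> 2\<close> by linarith
    then show ?thesis
      by (simp add: osc_def boundary)
  qed
  also have "\<dots> \<le> (1 - p) ^ k"
    by (rule near_2) auto
  finally show "jump x \<le> 0 + e"
    using k by simp
qed

lemma jump_eq_0: "jump x = 0"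
proof -
  have "jump x \<le> 0"
  proof (rule subsolution_nonpos[where p = p and w = jump])
    have "jump y \<le> 1" for y
      using jump_le_osc[of 1 y] le_1[of "y - 1"] nonneg[of "y + 1"] by (simp add: osc_def)
    then show "bdd_above (range jump)"
      by (intro bdd_aboveI2)
    show "eventually (\<lambda>x. jump x < e) (at_right 2)" if "0 < e" for e
    proof -
      have "filterlim (\<lambda>x::real. 2 * x - 2) (at_right 2) (at_right 2)"
        by real_asymp
      then have "eventually (\<lambda>x. 1 - \<phi> (2 * x - 2) < e) (at_right 2)"
        using eventually_near_2[OF that] by (auto simp: filterlim_iff)
      moreover have "eventually (\<lambda>x. 2 < x) (at_right (2::real))"
        by (simp add: eventually_at_right_less)
      ultimately show ?thesis
      proof eventually_elim
        case (elim x)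
        then have "jump x \<le> osc (x - 2) x"
          by (intro jump_le_osc) simp
        then show ?case
          using elim boundary[of 2] by (simp add: osc_def)
      qed
    qed
    show "eventually (\<lambda>x. jump x < e) at_top" if e: "0 < e" for e
    proof -
      obtain R where R: "\<And>y. R \<le> y \<Longrightarrow> \<phi> y < e"
        using order_tendstoD(2)[OF tendsto_0 e] by (auto simp: eventually_at_top_linorder)
      have "jump x < e" if "R + 1 \<le> x" for x
        using jump_le_osc[of 1 x] R[of "x - 1"] nonneg[of "x + 1"] that by (simp add: osc_def)
      then show ?thesis
        by (auto simp: eventually_at_top_linorder)
    qed
  qed (use param jump_boundary jump_subsolution in auto)
  then show ?thesis
    using jump_nonneg[of x] by simp
qed

lemma isCont: "isCont \<phi> x"
  unfolding isCont_def LIM_eq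
proof (intro allI impI)
  fix r :: real
  assume "0 < r"
  then obtain \<delta> where \<delta>: "0 < \<delta>" "osc \<delta> x < r"
    using osc_close_to_jump[of r x] jump_eq_0[of x] by auto
  have "\<bar>\<phi> y - \<phi> x\<bar> < r" if "\<bar>y - x\<bar> < \<delta>" for y
    using antimonoD[OF antimono, of "x - \<delta>" y] antimonoD[OF antimono, of y "x + \<delta>"]
      antimonoD[OF antimono, of "x - \<delta>" x] antimonoD[OF antimono, of x "x + \<delta>"] that \<delta>
    by (simp add: osc_def abs_if split: if_splits)
  then show "\<exists>s>0. \<forall>y. y \<noteq> x \<and> norm (y - x) < s \<longrightarrow> norm (\<phi> y - \<phi> x) < r"
    using \<delta> by auto
qed

end

lemma ruin_solution_unique: "ruin_solution p \<phi> \<Longrightarrow> ruin_solution p \<psi> \<Longrightarrow> \<phi> = \<psi>"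
  by (intro ext order.antisym ruin_solution.le_solution)

lemma ruin_solution_ruin_prob:
  assumes p: "0 < p" "p < 1 / 2"
  shows "ruin_solution p (\<lambda>x. ruin_prob x p)"
proof
  show "0 < p" "p < 1"
    using p by simp_all
  show "ruin_prob x p = 1" if "x \<le> 2" for x
    using ruin_prob_le_2[OF _ _ that] p by simp
  show "ruin_prob x p = p * ruin_prob ((x + 1) / 2) p + (1 - p) * ruin_prob (2 * x - 2) p"
    if "2 < x" for x
    using ruin_prob_first_step[of x p] that p by simp
  show "antimono (\<lambda>x. ruin_prob x p)"
    using p by (intro antimonoI ruin_prob_antimono) simp_all
  show "((\<lambda>x. ruin_prob x p) \<longlongrightarrow> 0) at_top"
    using ruin_prob_tendsto_0[OF p] .
qed

section \<open>Continuity in the winning probability\<close>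

lemma ruin_solution_limit:
  assumes q_01: "\<And>n. 0 < q n" "\<And>n. q n < 1" and q: "q \<longlonglongrightarrow> p0" and p0: "0 < p0" "p0 < 1"
    and lim: "\<And>x. (\<lambda>n. ruin_prob x (q n)) \<longlonglongrightarrow> \<phi> x"
    and tendsto_0: "(\<phi> \<longlongrightarrow> 0) at_top"
  shows "ruin_solution p0 \<phi>"
proof
  show "0 < p0" "p0 < 1"
    by (fact p0)+
  show "\<phi> x = 1" if "x \<le> 2" for x
    using LIMSEQ_unique[OF lim] ruin_prob_le_2[OF q_01 that] by simp
  show "\<phi> x = p0 * \<phi> ((x + 1) / 2) + (1 - p0) * \<phi> (2 * x - 2)" if "2 < x" for x
  proof -
    have "ruin_prob x (q n)
          = q n * ruin_prob ((x + 1) / 2) (q n) + (1 - q n) * ruin_prob (2 * x - 2) (q n)" for n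
      using ruin_prob_first_step[of x "q n"] that q_01[of n] by simp
    moreover have "(\<lambda>n. q n * ruin_prob ((x + 1) / 2) (q n) + (1 - q n) * ruin_prob (2 * x - 2) (q n))
        \<longlonglongrightarrow> p0 * \<phi> ((x + 1) / 2) + (1 - p0) * \<phi> (2 * x - 2)"
      by (intro tendsto_intros q lim)
    ultimately show ?thesis
      using LIMSEQ_unique[OF lim[of x]] by simp
  qed
  show "antimono \<phi>"
    by (intro antimonoI LIMSEQ_le[OF lim lim] exI[of _ 0] allI impI ruin_prob_antimono q_01)
  show "(\<phi> \<longlongrightarrow> 0) at_top"
    by (fact tendsto_0)
qed

lemma monoseq_le_max_limit:
  fixes q :: "nat \<Rightarrow> real"
  assumes "monoseq q" "q \<longlonglongrightarrow> L"
  shows "q n \<le> max (q 0) L"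
  using assms incseq_le[of q L n] by (auto simp: monoseq_iff decseq_def le_max_iff_disj)

lemma monoseq_ruin_prob_param:
  assumes "monoseq q" "\<And>n. 0 < q n" "\<And>n. q n < 1"
  shows "monoseq (\<lambda>n. ruin_prob x (q n))"
  using assms unfolding monoseq_def by (meson ruin_prob_mono_param)

lemma ruin_prob_tendsto_monoseq_param:
  assumes q: "\<And>n. 0 < q n" "\<And>n. q n < 1 / 2" "monoseq q" "q \<longlonglongrightarrow> p0"
    and p0: "0 < p0" "p0 < 1 / 2"
  shows "(\<lambda>n. ruin_prob x (q n)) \<longlonglongrightarrow> ruin_prob x p0"
proof -
  define q_max where "q_max = max (q 0) p0"
  have q_01: "0 < q n" "q n < 1" for n
    using q(1,2)[of n] by simp_all
  have q_max: "0 < q_max" "q_max < 1 / 2" "q n \<le> q_max" for n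
    using q(1,2)[of 0] p0 monoseq_le_max_limit[OF q(3,4)] by (simp_all add: q_max_def)
  have rp_bounds: "0 \<le> ruin_prob y (q n)" "ruin_prob y (q n) \<le> 1" for y n
    using ruin_prob_bounds[of "q n" y] q_01[of n] by simp_all
  then have "Bseq (\<lambda>n. ruin_prob y (q n))" for y
    by (intro BseqI'[of _ 1]) simp
  then have "convergent (\<lambda>n. ruin_prob y (q n))" for y
    using monoseq_ruin_prob_param[OF q(3) q_01] by (rule Bseq_monoseq_convergent)
  then have lim: "(\<lambda>n. ruin_prob y (q n)) \<longlonglongrightarrow> lim (\<lambda>n. ruin_prob y (q n))" for y
    by (simp add: convergent_LIMSEQ_iff)
  have "((\<lambda>y. lim (\<lambda>n. ruin_prob y (q n))) \<longlongrightarrow> 0) at_top"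
  proof (rule tendsto_sandwich[OF _ _ tendsto_const ruin_prob_tendsto_0[OF q_max(1,2)]])
    show "eventually (\<lambda>y. 0 \<le> lim (\<lambda>n. ruin_prob y (q n))) at_top"
      using rp_bounds by (intro always_eventually allI LIMSEQ_le_const[OF lim] exI[of _ 0]) simp
    show "eventually (\<lambda>y. lim (\<lambda>n. ruin_prob y (q n)) \<le> ruin_prob y q_max) at_top"
      using q_01 q_max
      by (intro always_eventually allI LIMSEQ_le_const2[OF lim] exI[of _ 0] impI ruin_prob_mono_param)
        auto
  qed
  then have "ruin_solution p0 (\<lambda>y. lim (\<lambda>n. ruin_prob y (q n)))"
    using p0 by (intro ruin_solution_limit[OF q_01(1,2) q(4)] lim) simp_all
  then have "(\<lambda>y. lim (\<lambda>n. ruin_prob y (q n))) = (\<lambda>y. ruin_prob y p0)"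
    using ruin_solution_ruin_prob[OF p0] by (rule ruin_solution_unique)
  then show ?thesis
    using lim[of x] by metis
qed

lemma ruin_prob_isCont_param:
  assumes p0: "0 < p0" "p0 < 1 / 2"
  shows "isCont (\<lambda>p. ruin_prob x p) p0"
  unfolding isCont_def filterlim_at_split
proof
  show "((\<lambda>p. ruin_prob x p) \<longlongrightarrow> ruin_prob x p0) (at_left p0)"
  proof (rule tendsto_at_left_sequentially[OF p0(1)])
    fix S :: "nat \<Rightarrow> real"
    assume S: "\<And>n. S n < p0" "\<And>n. 0 < S n" "incseq S" "S \<longlonglongrightarrow> p0"
    show "(\<lambda>n. ruin_prob x (S n)) \<longlonglongrightarrow> ruin_prob x p0"
      using S p0 less_trans[OF S(1) p0(2)]
      by (intro ruin_prob_tendsto_monoseq_param incseq_imp_monoseq) auto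
  qed
  show "((\<lambda>p. ruin_prob x p) \<longlongrightarrow> ruin_prob x p0) (at_right p0)"
  proof (rule tendsto_at_right_sequentially[OF p0(2)])
    fix S :: "nat \<Rightarrow> real"
    assume S: "\<And>n. p0 < S n" "\<And>n. S n < 1 / 2" "decseq S" "S \<longlonglongrightarrow> p0"
    show "(\<lambda>n. ruin_prob x (S n)) \<longlonglongrightarrow> ruin_prob x p0"
      using S p0 less_trans[OF p0(1) S(1)]
      by (intro ruin_prob_tendsto_monoseq_param decseq_imp_monoseq) auto
  qed
qed

section \<open>Locally uniform convergence\<close>

lemma finite_grid_below:
  fixes a b h :: real
  assumes h: "0 < h"
  obtains A where "finite A" "A \<subseteq> {a..b}" "\<And>t. t \<in> {a..b} \<Longrightarrow> \<exists>s\<in>A. s \<le> t \<and> t - s < h"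
proof -
  define grid where "grid t = a + h * of_int \<lfloor>(t - a) / h\<rfloor>" for t
  have grid: "grid t \<in> {a..b}" "grid t \<le> t" "t - grid t < h"
    "grid t \<in> (\<lambda>k. a + h * of_int k) ` {0..\<lceil>(b - a) / h\<rceil>}" if t: "t \<in> {a..b}" for t
  proof -
    define k where "k = \<lfloor>(t - a) / h\<rfloor>"
    have div_h: "(t - a) / h * h = t - a"
      using h by simp
    have "of_int k * h \<le> t - a"
      using mult_right_mono[OF of_int_floor_le[of "(t - a) / h"], of h] h
      unfolding div_h by (simp add: k_def)
    moreover have "t - a < (of_int k + 1) * h"
      using mult_strict_right_mono[OF real_of_int_floor_add_one_gt[of "(t - a) / h"] h]
      unfolding div_h by (simp add: k_def)
    moreover have "0 \<le> k"
      using t h by (simp add: k_def)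
    moreover have "k \<le> \<lceil>(b - a) / h\<rceil>"
    proof -
      have "(t - a) / h \<le> (b - a) / h"
        using t h by (simp add: divide_right_mono)
      then show ?thesis
        using floor_mono floor_le_ceiling[of "(b - a) / h"] unfolding k_def by (meson order.trans)
    qed
    ultimately show "grid t \<in> {a..b}" "grid t \<le> t" "t - grid t < h"
      "grid t \<in> (\<lambda>k. a + h * of_int k) ` {0..\<lceil>(b - a) / h\<rceil>}"
      using t h by (auto simp: grid_def k_def[symmetric] algebra_simps)
  qed
  show ?thesis
  proof (rule that[of "grid ` {a..b}"])
    show "finite (grid ` {a..b})"
      by (rule finite_subset[of _ "(\<lambda>k. a + h * of_int k) ` {0..\<lceil>(b - a) / h\<rceil>}"])
        (use grid(4) in auto)
    show "grid ` {a..b} \<subseteq> {a..b}"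
      using grid(1) by blast
    show "\<exists>s\<in>grid ` {a..b}. s \<le> t \<and> t - s < h" if "t \<in> {a..b}" for t
      using grid(2,3)[OF that] that by blast
  qed
qed

lemma uniform_limit_mono_on_interval:
  fixes F :: "nat \<Rightarrow> real \<Rightarrow> real" and G :: "real \<Rightarrow> real"
  assumes mono: "\<And>n. mono_on {a..b} (F n)"
    and cont: "continuous_on {a..b} G"
    and lim: "\<And>t. t \<in> {a..b} \<Longrightarrow> (\<lambda>n. F n t) \<longlonglongrightarrow> G t"
    and below: "\<And>n t. t \<in> {a..b} \<Longrightarrow> F n t \<le> G t"
  shows "uniform_limit {a..b} F G sequentially"
  unfolding uniform_limit_iff
proof (intro allI impI)
  fix e :: real
  assume e: "0 < e"
  obtain h where h: "0 < h"
    and h_cont: "\<And>s t. s \<in> {a..b} \<Longrightarrow> t \<in> {a..b} \<Longrightarrow> dist s t < h \<Longrightarrow> dist (G s) (G t) < e / 2"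
    using compact_uniformly_continuous[OF cont compact_Icc] e
    unfolding uniformly_continuous_on_def by (metis half_gt_zero)
  obtain A where A: "finite A" "A \<subseteq> {a..b}" "\<And>t. t \<in> {a..b} \<Longrightarrow> \<exists>s\<in>A. s \<le> t \<and> t - s < h"
    using finite_grid_below[OF h] by blast
  have "\<forall>s\<in>A. \<forall>\<^sub>F n in sequentially. dist (F n s) (G s) < e / 2"
    using A(2) lim e unfolding tendsto_iff by (meson half_gt_zero subsetD)
  then have "\<forall>\<^sub>F n in sequentially. \<forall>s\<in>A. dist (F n s) (G s) < e / 2"
    by (rule eventually_ball_finite[OF A(1)])
  then show "\<forall>\<^sub>F n in sequentially. \<forall>t\<in>{a..b}. dist (F n t) (G t) < e"
  proof eventually_elim
    case (elim n)
    show ?case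
    proof
      fix t
      assume t: "t \<in> {a..b}"
      then obtain s where s: "s \<in> A" "s \<le> t" "t - s < h"
        using A(3) by blast
      have "dist (F n s) (G s) < e / 2"
        using elim s by blast
      moreover have "dist (G s) (G t) < e / 2"
        using s A(2) t by (intro h_cont) (auto simp: dist_real_def)
      moreover have "F n s \<le> F n t"
        using mono_onD[OF mono] s A(2) t by blast
      ultimately show "dist (F n t) (G t) < e"
        using below[OF t, of n] by (simp add: dist_real_def abs_if split: if_splits)
    qed
  qed
qed

lemma uniform_limit_antimono_on_interval:
  fixes F :: "nat \<Rightarrow> real \<Rightarrow> real" and G :: "real \<Rightarrow> real"
  assumes antimono: "\<And>n. antimono_on {a..b} (F n)"
    and cont: "continuous_on {a..b} G"
    and lim: "\<And>t. t \<in> {a..b} \<Longrightarrow> (\<lambda>n. F n t) \<longlonglongrightarrow> G t"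
    and below: "\<And>n t. t \<in> {a..b} \<Longrightarrow> F n t \<le> G t"
  shows "uniform_limit {a..b} F G sequentially"
proof -
  have "uniform_limit {-b..-a} (\<lambda>n t. F n (- t)) (\<lambda>t. G (- t)) sequentially"
  proof (rule uniform_limit_mono_on_interval)
    show "mono_on {-b..-a} (\<lambda>t. F n (- t))" for n
    proof (rule mono_onI)
      fix r s
      assume "r \<in> {-b..-a}" "s \<in> {-b..-a}" "r \<le> s"
      then show "F n (- r) \<le> F n (- s)"
        using monotone_onD[OF antimono[of n], of "- s" "- r"] by auto
    qed
    show "continuous_on {-b..-a} (\<lambda>t. G (- t))"
      by (rule continuous_on_compose2[OF cont]) (auto intro!: continuous_intros)
  qed (auto intro!: lim below)
  then have "uniform_limit {a..b} (\<lambda>n t. F n (- (- t))) (\<lambda>t. G (- (- t))) sequentially"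
    by (rule uniform_limit_compose') auto
  then show ?thesis
    by simp
qed

lemma uniform_limit_compact_from_intervals:
  fixes F :: "nat \<Rightarrow> real \<Rightarrow> 'a::metric_space" and U K :: "real set"
  assumes U: "connected U"
    and intervals: "\<And>a b. {a..b} \<subseteq> U \<Longrightarrow> uniform_limit {a..b} F g sequentially"
    and K: "compact K" "K \<subseteq> U"
  shows "uniform_limit K F g sequentially"
proof (cases "K = {}")
  case False
  obtain a where a: "a \<in> K" "\<And>t. t \<in> K \<Longrightarrow> a \<le> t"
    using compact_attains_inf[OF K(1) False] by blast
  obtain b where b: "b \<in> K" "\<And>t. t \<in> K \<Longrightarrow> t \<le> b"
    using compact_attains_sup[OF K(1) False] by blast
  have "uniform_limit {a..b} F g sequentially"
    using connected_contains_Icc[OF U] a b K(2) by (intro intervals) blast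
  then show ?thesis
    by (rule uniform_limit_on_subset) (use a b in auto)
qed simp

lemma f_approx_uniform_limit_param:
  assumes "compact K" "K \<subseteq> {0<..<1/2}"
  shows "uniform_limit K (\<lambda>n p. f_approx n x p) (\<lambda>p. ruin_prob x p) sequentially"
proof (rule uniform_limit_compact_from_intervals[OF connected_Ioo _ assms])
  fix a b :: real
  assume "{a..b} \<subseteq> {0<..<1/2}"
  then have p: "0 < p" "p < 1 / 2" if "p \<in> {a..b}" for p
    using that by auto
  show "uniform_limit {a..b} (\<lambda>n p. f_approx n x p) (\<lambda>p. ruin_prob x p) sequentially"
  proof (rule uniform_limit_mono_on_interval)
    show "mono_on {a..b} (\<lambda>p. f_approx n x p)" for n
    proof (rule mono_onI)
      fix r s
      assume "r \<in> {a..b}" "s \<in> {a..b}" "r \<le> s"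
      then show "f_approx n x r \<le> f_approx n x s"
        using p[of r] p[of s] by (intro f_approx_mono_param) auto
    qed
    show "continuous_on {a..b} (\<lambda>p. ruin_prob x p)"
      using p by (intro continuous_at_imp_continuous_on ballI ruin_prob_isCont_param)
    show "(\<lambda>n. f_approx n x t) \<longlonglongrightarrow> ruin_prob x t" if "t \<in> {a..b}" for t
      using p[OF that] by (intro f_approx_tendsto) auto
    show "f_approx n x t \<le> ruin_prob x t" if "t \<in> {a..b}" for n t
      using p[OF that] by (intro f_approx_le_ruin_prob) auto
  qed
qed

lemma f_approx_uniform_limit_wealth:
  assumes p: "0 < p" "p < 1 / 2" and K: "compact K"
  shows "uniform_limit K (\<lambda>n x. f_approx n x p) (\<lambda>x. ruin_prob x p) sequentially"
proof (rule uniform_limit_compact_from_intervals[OF connected_UNIV _ K subset_UNIV])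
  interpret ruin_solution p "\<lambda>x. ruin_prob x p"
    using ruin_solution_ruin_prob[OF p] .
  fix a b :: real
  show "uniform_limit {a..b} (\<lambda>n x. f_approx n x p) (\<lambda>x. ruin_prob x p) sequentially"
  proof (rule uniform_limit_antimono_on_interval)
    show "antimono_on {a..b} (\<lambda>x. f_approx n x p)" for n
      using p by (intro monotone_onI f_approx_antimono) simp_all
    show "continuous_on {a..b} (\<lambda>x. ruin_prob x p)"
      by (intro continuous_at_imp_continuous_on ballI isCont)
  qed (use p in \<open>simp_all add: f_approx_tendsto f_approx_le_ruin_prob\<close>)
qed

theorem proposition1p3:
  shows "(\<forall>x::real. x > 2 \<longrightarrow>
            locally_uniform_limit {0<..<1/2} (\<lambda>n p. f_approx n x p) (\<lambda>p. ruin_prob x p))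
       \<and> (\<forall>p::real. 0 < p \<and> p < 1/2 \<longrightarrow>
            locally_uniform_limit {2<..} (\<lambda>n x. f_approx n x p) (\<lambda>x. ruin_prob x p))
       \<and> (\<forall>x p::real. x > 2 \<and> 0 < p \<and> p < 1/2 \<longrightarrow>
            ruin_prob x p = p * ruin_prob ((x + 1) / 2) p + (1 - p) * ruin_prob (2 * x - 2) p)"
proof (intro conjI allI impI)
  show "locally_uniform_limit {0<..<1/2} (\<lambda>n p. f_approx n x p) (\<lambda>p. ruin_prob x p)" for x
    by (auto simp: locally_uniform_limit_def intro!: f_approx_uniform_limit_param)
  show "locally_uniform_limit {2<..} (\<lambda>n x. f_approx n x p) (\<lambda>x. ruin_prob x p)"
    if "0 < p \<and> p < 1/2" for p
    using that by (auto simp: locally_uniform_limit_def intro!: f_approx_uniform_limit_wealth)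
  show "ruin_prob x p = p * ruin_prob ((x + 1) / 2) p + (1 - p) * ruin_prob (2 * x - 2) p"
    if "x > 2 \<and> 0 < p \<and> p < 1/2" for x p
    using that by (intro ruin_prob_first_step) simp_all
qed

end
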